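(* Let $M$ be a finite abelian group of exponent greater than $2$. Let $f'\in\mathrm{Aut}(K)$, $f''\in\mathrm{Aut}(M)$, and $u,v\in M$ with $u^2=v^2=1$. Then $F^+_{(f',f'',u,v)}$ is an automorphism of $L_M$ and $F^-_{(f',f'',u,v)}$ is a proper half-automorphism of $L_M$.
   Context: Let $K=\{1,a,b,c\}$ be the Klein four-group. Set $L_M=K\times M$ with the operation $(A,x)*(B,y)=(AB,xy)$ if $B=1$, and $(A,x)*(B,y)=(AB,x^{-1}y)$ if $B\neq 1$. For $u,v\in M$ with $u^2=v^2=1$, $\alpha_{(u,v)}:K\to M$ is defined by $\alpha_{(u,v)}(1)=1$, $\alpha_{(u,v)}(a)=u$, $\alpha_{(u,v)}(b)=v$, $\alpha_{(u,v)}(c)=uv$. For $f'\in\mathrm{Aut}(K)$, $f''\in\mathrm{Aut}(M)$ define $F^+_{(f',f'',u,v)}(A,x)=(f'(A),f''(x)\alpha_{(u,v)}(A))$ for all $(A,x)\in L_M$, and $F^-_{(f',f'',u,v)}(1,x)=(1,f''(x))$, $F^-_{(f',f'',u,v)}(A,x)=(f'(A),f''(x^{-1})\alpha_{(u,v)}(A))$ for $A\neq 1$. A half-automorphism of a loop $L$ is a bijection $f:L\to L$ with $f(XY)\in\{f(X)f(Y),f(Y)f(X)\}$ for all $X,Y$; it is proper if it is neither an automorphism nor an anti-automorphism. *)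

theory Defs
  imports "HOL-Algebra.Algebra"
begin

datatype klein = K1 | Ka | Kb | Kc

fun kmult :: "klein \<Rightarrow> klein \<Rightarrow> klein" where
  "kmult K1 y = y"
| "kmult x K1 = x"
| "kmult Ka Ka = K1" | "kmult Kb Kb = K1" | "kmult Kc Kc = K1"
| "kmult Ka Kb = Kc" | "kmult Kb Ka = Kc"
| "kmult Ka Kc = Kb" | "kmult Kc Ka = Kb"
| "kmult Kb Kc = Ka" | "kmult Kc Kb = Ka"

definition Klein :: "klein monoid" where
  "Klein = \<lparr>carrier = UNIV, monoid.mult = kmult, one = K1\<rparr>"

definition group_exponent :: "('a, 'b) monoid_scheme \<Rightarrow> nat" where
  "group_exponent G = (LEAST n. 0 < n \<and> (\<forall>x\<in>carrier G. x [^]\<^bsub>G\<^esub> n = \<one>\<^bsub>G\<^esub>))"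

definition LM_carrier :: "('a, 'b) monoid_scheme \<Rightarrow> (klein \<times> 'a) set" where
  "LM_carrier M = (UNIV :: klein set) \<times> carrier M"

definition LM_mult :: "('a, 'b) monoid_scheme \<Rightarrow> klein \<times> 'a \<Rightarrow> klein \<times> 'a \<Rightarrow> klein \<times> 'a" where
  "LM_mult M P Q = (case P of (A, x) \<Rightarrow> case Q of (B, y) \<Rightarrow>
     if B = K1 then (kmult A B, monoid.mult M x y)
     else (kmult A B, monoid.mult M (m_inv M x) y))"

definition alpha :: "('a, 'b) monoid_scheme \<Rightarrow> 'a \<Rightarrow> 'a \<Rightarrow> klein \<Rightarrow> 'a" where
  "alpha M u v A = (case A of K1 \<Rightarrow> one M | Ka \<Rightarrow> u | Kb \<Rightarrow> v | Kc \<Rightarrow> monoid.mult M u v)"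

definition Fplus :: "('a, 'b) monoid_scheme \<Rightarrow> (klein \<Rightarrow> klein) \<Rightarrow> ('a \<Rightarrow> 'a) \<Rightarrow> 'a \<Rightarrow> 'a
    \<Rightarrow> klein \<times> 'a \<Rightarrow> klein \<times> 'a" where
  "Fplus M f' f'' u v P = (case P of (A, x) \<Rightarrow> (f' A, monoid.mult M (f'' x) (alpha M u v A)))"

definition Fminus :: "('a, 'b) monoid_scheme \<Rightarrow> (klein \<Rightarrow> klein) \<Rightarrow> ('a \<Rightarrow> 'a) \<Rightarrow> 'a \<Rightarrow> 'a
    \<Rightarrow> klein \<times> 'a \<Rightarrow> klein \<times> 'a" where
  "Fminus M f' f'' u v P = (case P of (A, x) \<Rightarrow>
     if A = K1 then (K1, f'' x)
     else (f' A, monoid.mult M (f'' (m_inv M x)) (alpha M u v A)))"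

definition loop_automorphism :: "'c set \<Rightarrow> ('c \<Rightarrow> 'c \<Rightarrow> 'c) \<Rightarrow> ('c \<Rightarrow> 'c) \<Rightarrow> bool" where
  "loop_automorphism S mul f \<longleftrightarrow> bij_betw f S S \<and>
     (\<forall>P\<in>S. \<forall>Q\<in>S. f (mul P Q) = mul (f P) (f Q))"

definition loop_anti_automorphism :: "'c set \<Rightarrow> ('c \<Rightarrow> 'c \<Rightarrow> 'c) \<Rightarrow> ('c \<Rightarrow> 'c) \<Rightarrow> bool" where
  "loop_anti_automorphism S mul f \<longleftrightarrow> bij_betw f S S \<and>
     (\<forall>P\<in>S. \<forall>Q\<in>S. f (mul P Q) = mul (f Q) (f P))"

definition half_automorphism :: "'c set \<Rightarrow> ('c \<Rightarrow> 'c \<Rightarrow> 'c) \<Rightarrow> ('c \<Rightarrow> 'c) \<Rightarrow> bool" where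
  "half_automorphism S mul f \<longleftrightarrow> bij_betw f S S \<and>
     (\<forall>P\<in>S. \<forall>Q\<in>S. f (mul P Q) \<in> {mul (f P) (f Q), mul (f Q) (f P)})"

definition proper_half_automorphism :: "'c set \<Rightarrow> ('c \<Rightarrow> 'c \<Rightarrow> 'c) \<Rightarrow> ('c \<Rightarrow> 'c) \<Rightarrow> bool" where
  "proper_half_automorphism S mul f \<longleftrightarrow> half_automorphism S mul f \<and>
     \<not> loop_automorphism S mul f \<and> \<not> loop_anti_automorphism S mul f"

end

theory Submission
  imports Defs
begin

text \<open>Away from the identity coset, \<open>F\<^sup>-\<close> is \<open>F\<^sup>+\<close> precomposed with inversion:
  \<open>F\<^sup>- = F\<^sup>+ \<circ> \<tau>\<close>, where \<open>\<tau>(1,x) = (1,x)\<close> and \<open>\<tau>(A,x) = (A,x\<^sup>-\<^sup>1)\<close> for \<open>A \<noteq> 1\<close>.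
  A direct computation shows that \<open>F\<^sup>+\<close> is an automorphism (this uses that \<open>\<alpha>\<close> is a
  homomorphism with values of order at most 2), and that \<open>\<tau>\<close> reverses products
  \<open>(A,x)(B,y)\<close> when \<open>A = 1\<close>, \<open>B = 1\<close> or \<open>A = B\<close> and preserves all others.
  An element \<open>w\<close> with \<open>w\<^sup>2 \<noteq> 1\<close>, which exists as the exponent exceeds 2,
  witnesses that \<open>\<tau>\<close> is neither an automorphism nor an anti-automorphism,
  and composing with the automorphism \<open>F\<^sup>+\<close> preserves all of this.\<close>

lemma kmult_K1_right [simp]: "kmult A K1 = A"
  by (cases A) auto

lemma kmult_self [simp]: "kmult A A = K1"
  by (cases A) auto

lemma kmult_eq_K1_iff: "kmult A B = K1 \<longleftrightarrow> A = B"
  by (cases A; cases B) auto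

lemma Klein_iso_kmult: "f \<in> iso Klein Klein \<Longrightarrow> f (kmult A B) = kmult (f A) (f B)"
  by (auto simp: iso_def hom_def Klein_def)

lemma Klein_iso_K1:
  assumes "f \<in> iso Klein Klein"
  shows "f K1 = K1"
  using Klein_iso_kmult[OF assms, of K1 K1] by (cases "f K1") auto

lemma Klein_iso_bij: "f \<in> iso Klein Klein \<Longrightarrow> bij f"
  by (simp add: iso_def Klein_def)

lemma Klein_iso_eq_K1_iff: "f \<in> iso Klein Klein \<Longrightarrow> f A = K1 \<longleftrightarrow> A = K1"
  by (metis Klein_iso_K1 Klein_iso_bij bij_pointE)

lemma (in monoid) exists_square_ne_one_if_exponent_gt_2:
  assumes "2 < group_exponent G"
  shows "\<exists>x\<in>carrier G. x \<otimes> x \<noteq> \<one>"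
proof (rule ccontr)
  assume "\<not> ?thesis"
  then have "\<forall>x\<in>carrier G. x [^] (2::nat) = \<one>"
    by (simp add: numeral_2_eq_2)
  then have "group_exponent G \<le> 2"
    unfolding group_exponent_def by (intro Least_le) simp
  with assms show False by simp
qed

lemma comp_loop_automorphism_eq_iff:
  assumes closed: "\<And>P Q. P \<in> S \<Longrightarrow> Q \<in> S \<Longrightarrow> mul P Q \<in> S"
    and g: "loop_automorphism S mul g" and h: "h ` S \<subseteq> S"
    and f: "\<And>P. P \<in> S \<Longrightarrow> f P = g (h P)"
    and "P \<in> S" "Q \<in> S" "R \<in> S"
  shows "f P = mul (f Q) (f R) \<longleftrightarrow> h P = mul (h Q) (h R)"
proof -
  have hS: "h P \<in> S" "h Q \<in> S" "h R \<in> S"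
    using h assms(5-7) by auto
  have "inj_on g S" using g by (simp add: loop_automorphism_def bij_betw_def)
  moreover have "mul (f Q) (f R) = g (mul (h Q) (h R))"
    using g hS assms(6,7) by (simp add: loop_automorphism_def f)
  ultimately show ?thesis
    using hS closed assms(5) by (simp add: f inj_on_eq_iff)
qed

lemma proper_half_automorphism_comp:
  assumes closed: "\<And>P Q. P \<in> S \<Longrightarrow> Q \<in> S \<Longrightarrow> mul P Q \<in> S"
    and g: "loop_automorphism S mul g" and h: "proper_half_automorphism S mul h"
    and f: "\<And>P. P \<in> S \<Longrightarrow> f P = g (h P)"
  shows "proper_half_automorphism S mul f"
proof -
  have h_bij: "bij_betw h S S"
    using h by (simp add: proper_half_automorphism_def half_automorphism_def)
  then have "bij_betw (g \<circ> h) S S"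
    using g by (auto simp: loop_automorphism_def intro: bij_betw_trans)
  then have f_bij: "bij_betw f S S"
    using f by (auto cong: bij_betw_cong)
  have hS: "h ` S \<subseteq> S"
    using h_bij by (simp add: bij_betw_def)
  have eq: "\<And>P Q R. P \<in> S \<Longrightarrow> Q \<in> S \<Longrightarrow> R \<in> S \<Longrightarrow>
      f P = mul (f Q) (f R) \<longleftrightarrow> h P = mul (h Q) (h R)"
    by (rule comp_loop_automorphism_eq_iff[OF closed g hS f])
  show ?thesis
    using h f_bij h_bij closed
    by (auto simp: proper_half_automorphism_def half_automorphism_def loop_automorphism_def
        loop_anti_automorphism_def eq)
qed

lemma (in group) iso_imp_group_hom: "h \<in> iso G G \<Longrightarrow> group_hom G G h"
  by unfold_locales (simp add: iso_iff)

lemma alpha_K1 [simp]: "alpha M u v K1 = \<one>\<^bsub>M\<^esub>"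
  by (simp add: alpha_def)

definition LM_twist :: "('a, 'b) monoid_scheme \<Rightarrow> klein \<times> 'a \<Rightarrow> klein \<times> 'a" where
  "LM_twist M P = (case P of (A, x) \<Rightarrow> (A, if A = K1 then x else inv\<^bsub>M\<^esub> x))"

lemma (in group) LM_mult_closed:
  "P \<in> LM_carrier G \<Longrightarrow> Q \<in> LM_carrier G \<Longrightarrow> LM_mult G P Q \<in> LM_carrier G"
  by (auto simp: LM_carrier_def LM_mult_def)

context comm_group
begin

lemma LM_twist_bij: "bij_betw (LM_twist G) (LM_carrier G) (LM_carrier G)"
  by (rule bij_betw_byWitness[where f' = "LM_twist G"])
    (auto simp: LM_twist_def LM_carrier_def)

lemma LM_twist_mult_anti:
  assumes "x \<in> carrier G" "y \<in> carrier G" "A = K1 \<or> B = K1 \<or> A = B"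
  shows "LM_twist G (LM_mult G (A, x) (B, y)) = LM_mult G (LM_twist G (B, y)) (LM_twist G (A, x))"
  using assms by (auto simp: LM_twist_def LM_mult_def kmult_eq_K1_iff inv_mult m_ac)

lemma LM_twist_mult:
  assumes "x \<in> carrier G" "y \<in> carrier G" "A \<noteq> K1" "B \<noteq> K1" "A \<noteq> B"
  shows "LM_twist G (LM_mult G (A, x) (B, y)) = LM_mult G (LM_twist G (A, x)) (LM_twist G (B, y))"
  using assms by (auto simp: LM_twist_def LM_mult_def kmult_eq_K1_iff inv_mult m_ac)

lemma LM_twist_half_automorphism: "half_automorphism (LM_carrier G) (LM_mult G) (LM_twist G)"
  unfolding half_automorphism_def
proof (intro conjI LM_twist_bij ballI)
  fix P Q assume "P \<in> LM_carrier G" "Q \<in> LM_carrier G"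
  then obtain A x B y where "P = (A, x)" "Q = (B, y)" "x \<in> carrier G" "y \<in> carrier G"
    by (auto simp: LM_carrier_def)
  then show "LM_twist G (LM_mult G P Q) \<in>
      {LM_mult G (LM_twist G P) (LM_twist G Q), LM_mult G (LM_twist G Q) (LM_twist G P)}"
    using LM_twist_mult LM_twist_mult_anti by blast
qed

lemma LM_twist_not_automorphism:
  assumes "w \<in> carrier G" "w \<otimes> w \<noteq> \<one>"
  shows "\<not> loop_automorphism (LM_carrier G) (LM_mult G) (LM_twist G)"
proof
  assume "loop_automorphism (LM_carrier G) (LM_mult G) (LM_twist G)"
  then have "LM_twist G (LM_mult G (K1, w) (Ka, \<one>)) =
      LM_mult G (LM_twist G (K1, w)) (LM_twist G (Ka, \<one>))"
    using assms(1) by (auto simp: loop_automorphism_def LM_carrier_def)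
  then have "w = inv w"
    using assms(1) by (simp add: LM_twist_def LM_mult_def)
  then show False
    using assms by (metis r_inv)
qed

lemma LM_twist_not_anti_automorphism:
  assumes "w \<in> carrier G" "w \<otimes> w \<noteq> \<one>"
  shows "\<not> loop_anti_automorphism (LM_carrier G) (LM_mult G) (LM_twist G)"
proof
  assume "loop_anti_automorphism (LM_carrier G) (LM_mult G) (LM_twist G)"
  then have "LM_twist G (LM_mult G (Ka, w) (Kb, \<one>)) =
      LM_mult G (LM_twist G (Kb, \<one>)) (LM_twist G (Ka, w))"
    using assms(1) by (auto simp: loop_anti_automorphism_def LM_carrier_def)
  then have "w = inv w"
    using assms(1) by (simp add: LM_twist_def LM_mult_def)
  then show False
    using assms by (metis r_inv)
qed

lemma LM_twist_proper_half_automorphism: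
  assumes "\<exists>w\<in>carrier G. w \<otimes> w \<noteq> \<one>"
  shows "proper_half_automorphism (LM_carrier G) (LM_mult G) (LM_twist G)"
  using assms LM_twist_half_automorphism LM_twist_not_automorphism LM_twist_not_anti_automorphism
  by (auto simp: proper_half_automorphism_def)

context
  fixes u v
  assumes u: "u \<in> carrier G" "u \<otimes> u = \<one>" and v: "v \<in> carrier G" "v \<otimes> v = \<one>"
begin

lemma alpha_closed: "alpha G u v A \<in> carrier G"
  using u v by (cases A) (auto simp: alpha_def)

lemma alpha_kmult: "alpha G u v (kmult A B) = alpha G u v A \<otimes> alpha G u v B"
  using u v by (cases A; cases B) (auto simp: alpha_def m_ac m_assoc[symmetric])

lemma alpha_inv: "inv (alpha G u v A) = alpha G u v A"
  using alpha_kmult[of A A] alpha_closed by (intro inv_equality) simp_all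

end

context
  fixes f' f''
  assumes f': "f' \<in> iso Klein Klein" and f''_hom: "group_hom G G f''"
begin

lemma Fminus_eq_Fplus_LM_twist:
  "P \<in> LM_carrier G \<Longrightarrow> Fminus G f' f'' u v P = Fplus G f' f'' u v (LM_twist G P)"
  using Klein_iso_K1[OF f'] group_hom.hom_closed[OF f''_hom]
  by (auto simp: Fminus_def Fplus_def LM_twist_def LM_carrier_def alpha_def)

context
  fixes u v
  assumes f''_bij: "bij_betw f'' (carrier G) (carrier G)"
    and u: "u \<in> carrier G" "u \<otimes> u = \<one>" and v: "v \<in> carrier G" "v \<otimes> v = \<one>"
begin

lemma Fplus_bij: "bij_betw (Fplus G f' f'' u v) (LM_carrier G) (LM_carrier G)"
proof (rule bij_betwI')
  note \<alpha> = alpha_closed[OF u v] alpha_kmult[OF u v, of A A for A]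
  fix P Q assume "P \<in> LM_carrier G" "Q \<in> LM_carrier G"
  then show "Fplus G f' f'' u v P = Fplus G f' f'' u v Q \<longleftrightarrow> P = Q"
    using Klein_iso_bij[OF f'] f''_bij \<alpha> group_hom.hom_closed[OF f''_hom]
    by (auto simp: Fplus_def LM_carrier_def bij_def bij_betw_def inj_eq inj_on_eq_iff)
next
  fix P assume "P \<in> LM_carrier G"
  then show "Fplus G f' f'' u v P \<in> LM_carrier G"
    using group_hom.hom_closed[OF f''_hom] alpha_closed[OF u v]
    by (auto simp: Fplus_def LM_carrier_def)
next
  fix Q assume "Q \<in> LM_carrier G"
  then obtain B y where Q: "Q = (B, y)" "y \<in> carrier G"
    by (auto simp: LM_carrier_def)
  obtain A where A: "f' A = B"
    using Klein_iso_bij[OF f'] by (metis bij_pointE)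
  have "y \<otimes> alpha G u v A \<in> f'' ` carrier G"
    using Q alpha_closed[OF u v] f''_bij by (simp add: bij_betw_def)
  then obtain x where x: "x \<in> carrier G" "f'' x = y \<otimes> alpha G u v A"
    by (metis imageE)
  have "Fplus G f' f'' u v (A, x) = (B, y)"
    using A x Q alpha_closed[OF u v] alpha_kmult[OF u v, of A A]
    by (simp add: Fplus_def m_assoc)
  then show "\<exists>P\<in>LM_carrier G. Q = Fplus G f' f'' u v P"
    using Q x by (metis SigmaI UNIV_I LM_carrier_def)
qed

lemma Fplus_mult:
  assumes "x \<in> carrier G" "y \<in> carrier G"
  shows "Fplus G f' f'' u v (LM_mult G (A, x) (B, y)) =
    LM_mult G (Fplus G f' f'' u v (A, x)) (Fplus G f' f'' u v (B, y))"
  using assms alpha_closed[OF u v, of A] alpha_closed[OF u v, of B]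
    group_hom.hom_closed[OF f''_hom] group_hom.hom_mult[OF f''_hom]
    group_hom.hom_inv[OF f''_hom]
  by (auto simp: Fplus_def LM_mult_def Klein_iso_kmult[OF f'] Klein_iso_eq_K1_iff[OF f']
      Klein_iso_K1[OF f'] alpha_kmult[OF u v] alpha_inv[OF u v] inv_mult m_ac)

lemma Fplus_loop_automorphism: "loop_automorphism (LM_carrier G) (LM_mult G) (Fplus G f' f'' u v)"
  unfolding loop_automorphism_def
  using Fplus_bij Fplus_mult by (auto simp: LM_carrier_def)

end

end

end

theorem proposition4p10:
  fixes M :: "('a, 'b) monoid_scheme"
    and f' :: "klein \<Rightarrow> klein" and f'' :: "'a \<Rightarrow> 'a" and u v :: 'a
  assumes "comm_group M" and "finite (carrier M)"
    and "group_exponent M > 2"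
    and "f' \<in> iso Klein Klein" and "f'' \<in> iso M M"
    and "u \<in> carrier M" and "v \<in> carrier M"
    and "u \<otimes>\<^bsub>M\<^esub> u = \<one>\<^bsub>M\<^esub>" and "v \<otimes>\<^bsub>M\<^esub> v = \<one>\<^bsub>M\<^esub>"
  shows "loop_automorphism (LM_carrier M) (LM_mult M) (Fplus M f' f'' u v)
       \<and> proper_half_automorphism (LM_carrier M) (LM_mult M) (Fminus M f' f'' u v)"
proof -
  interpret comm_group M by fact
  have f'': "group_hom M M f''" "bij_betw f'' (carrier M) (carrier M)"
    using iso_imp_group_hom assms(5) by (simp_all add: iso_def)
  have Fplus: "loop_automorphism (LM_carrier M) (LM_mult M) (Fplus M f' f'' u v)"
    using Fplus_loop_automorphism assms(4,6-9) f'' by blast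
  have "proper_half_automorphism (LM_carrier M) (LM_mult M) (LM_twist M)"
    using LM_twist_proper_half_automorphism exists_square_ne_one_if_exponent_gt_2 assms(3) by blast
  then have "proper_half_automorphism (LM_carrier M) (LM_mult M) (Fminus M f' f'' u v)"
    using proper_half_automorphism_comp LM_mult_closed Fplus
      Fminus_eq_Fplus_LM_twist[OF assms(4) f''(1)] by blast
  with Fplus show ?thesis ..
qed

end
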